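(* $$\int_{0}^{1}\frac{\log\big((1-x)(x^2+1)\big)\,\log(\log x)}{x}\,dx=\frac18\left(-6\zeta'(2)+(\gamma-i\pi)\pi^2\right),$$ where $\gamma$ is Euler's constant and $\zeta$ the Riemann zeta function.
   Context: For $x\in(0,1)$, $\log(\log x)=\log|\log x|+i\pi$ (principal branch). *)

theory Defs
  imports "HOL-Analysis.Analysis"
begin

text \<open>Only its derivative at s = 2 is used; since the half-plane is open, this
  coincides with the derivative of the analytically continued zeta.\<close>
definition riemann_zeta :: "complex \<Rightarrow> complex" where
  "riemann_zeta s = (if Re s > 1 then (\<Sum>n. 1 / (of_nat (Suc n)) powr s) else 0)"

end

(*
  On (0,1) we have ln((1 - x)(1 + x^2)) = ln(1 - x) + ln(1 - x^4) - ln(1 - x^2), and for the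
  principal branch Ln(ln x) = ln(-ln x) + i pi. It therefore suffices to integrate
  ln(1 - x^m) phi(x) / x over (0,1) for phi(x) = ln(-ln x) and phi(x) = 1. Expanding
  ln(1 - x^m) = - sum_n x^(mn) / n and integrating termwise (the series converges absolutely in L^1)
  reduces this to the Mellin integrals int_0^1 x^(k-1) dx = 1/k and
  int_0^1 x^(k-1) ln(-ln x) dx = -(gamma + ln k)/k; the latter follows by substituting
  x = exp(-w/k) from int_0^oo e^(-w) ln w dw = Gamma'(1) = -gamma. Summing over n gives
  ((gamma + ln m) zeta(2) - zeta'(2))/m and -zeta(2)/m, where zeta'(2) = - sum_n ln n / n^2 by
  termwise differentiation of the Dirichlet series.
*)

theory Submission
  imports Defs
begin

section \<open>Integrals against the weight exp(-t) on (0, infinity)\<close>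

lemma Gamma_has_integral_Ioi:
  assumes "x > (0::real)"
  shows "((\<lambda>t. t powr (x - 1) / exp t) has_integral Gamma x) {0<..}"
proof -
  have "((\<lambda>t. t powr (x - 1) / exp t) has_integral Gamma x) {0..}"
    using Gamma_integral_real[OF assms] .
  moreover have "negligible {t \<in> {0..} - {0<..}. t powr (x - 1) / exp t \<noteq> 0}"
    by (rule negligible_subset[of "{0}"]) auto
  ultimately show ?thesis
    by (subst has_integral_spike_set_eq[of _ "{0..}"]) (auto intro: negligible_subset[of "{}"])
qed

lemma powr_exp_integrable_Ioi:
  assumes "a > (-1::real)"
  shows "(\<lambda>t. t powr a / exp t) integrable_on {0<..}"
  using Gamma_has_integral_Ioi[of "a + 1"] assms by (auto simp: integrable_on_def)

lemma exp_neg_has_integral_Ioi: "((\<lambda>t::real. 1 / exp t) has_integral 1) {0<..}"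
  by (rule has_integral_eq[OF _ Gamma_has_integral_Ioi[of 1, unfolded Gamma_1]]) auto

lemma exp_neg_absolutely_integrable_Ioi: "(\<lambda>t::real. 1 / exp t) absolutely_integrable_on {0<..}"
  by (rule nonnegative_absolutely_integrable_1) (use exp_neg_has_integral_Ioi in auto)

lemma abs_ln_le_powr:
  assumes "t > (0::real)"
  shows "\<bar>ln t\<bar> \<le> 2 * t powr (-1/2) + t"
proof (cases "t \<ge> 1")
  case True
  moreover have "0 \<le> t powr (-1/2)" by simp
  moreover have "\<bar>ln t\<bar> = ln t" using True by simp
  ultimately show ?thesis using ln_le_minus_one[of t] by linarith
next
  case False
  have "-(1/2) * ln t = ln (t powr (-1/2))" using assms by (simp add: ln_powr)
  also have "\<dots> \<le> t powr (-1/2)" using ln_le_minus_one[of "t powr (-1/2)"] assms by simp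
  finally show ?thesis using False assms by simp
qed

lemma abs_powr_difference_quotient_le:
  assumes "t > (0::real)" "0 < h" "h \<le> 1"
  shows "\<bar>(t powr h - 1) / h\<bar> \<le> \<bar>ln t\<bar> * (1 + t)"
proof -
  have "\<And>u. ((\<lambda>u. t powr u) has_real_derivative ln t * t powr u) (at u)"
    using assms(1) by (auto intro!: derivative_eq_intros)
  then obtain z where z: "0 < z" "z < h" and mvt: "t powr h - t powr 0 = (h - 0) * (ln t * t powr z)"
    using MVT2[of 0 h "\<lambda>u. t powr u" "\<lambda>u. ln t * t powr u"] assms(2) by blast
  have "t powr z \<le> 1 + t"
  proof (cases "t \<ge> 1")
    case True
    then have "t powr z \<le> t powr 1" using z assms by (intro powr_mono) auto
    then show ?thesis using assms by simp
  next
    case False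
    then have "t powr z \<le> 1" using z assms by (intro powr_le1) auto
    then show ?thesis using assms by simp
  qed
  then have "\<bar>ln t\<bar> * t powr z \<le> \<bar>ln t\<bar> * (1 + t)" by (intro mult_left_mono) auto
  then show ?thesis using mvt assms by (simp add: abs_mult)
qed

definition ln_exp_majorant :: "real \<Rightarrow> real" where
  "ln_exp_majorant t = (2 * t powr (-1/2) + t) * (1 + t) / exp t"

lemma ln_exp_majorant_integrable: "ln_exp_majorant integrable_on {0<..}"
proof -
  have sum_integrable: "(\<lambda>t::real. 2 * (t powr (-1/2) / exp t) + 2 * (t powr (1/2) / exp t)
          + t powr 1 / exp t + t powr 2 / exp t) integrable_on {0<..}"
    by (intro integrable_add integrable_on_mult_right powr_exp_integrable_Ioi) auto
  have "2 * (t powr (-1/2) / exp t) + 2 * (t powr (1/2) / exp t) + t powr 1 / exp t + t powr 2 / exp t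
          = ln_exp_majorant t" if "t > 0" for t :: real
  proof -
    have "t powr (-1/2) * t = t powr (1/2)"
      using that by (subst mult.commute, subst powr_mult_base) auto
    then show ?thesis
      using that unfolding ln_exp_majorant_def by (simp add: field_simps power2_eq_square)
  qed
  then show ?thesis by (intro integrable_eq[OF sum_integrable]) auto
qed

lemma abs_ln_mult_le_majorant:
  assumes "t > (0::real)"
  shows "\<bar>ln t\<bar> * (1 + t) / exp t \<le> ln_exp_majorant t"
  unfolding ln_exp_majorant_def
  using abs_ln_le_powr[OF assms] assms by (intro divide_right_mono mult_right_mono) auto

lemma abs_powr_difference_quotient_div_exp_le:
  assumes "t > (0::real)" "0 < h" "h \<le> 1"
  shows "\<bar>(t powr h - 1) / h / exp t\<bar> \<le> ln_exp_majorant t"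
proof -
  have "\<bar>(t powr h - 1) / h / exp t\<bar> = \<bar>(t powr h - 1) / h\<bar> / exp t"
    by (subst abs_divide) simp
  also have "\<dots> \<le> \<bar>ln t\<bar> * (1 + t) / exp t"
    using abs_powr_difference_quotient_le[OF assms] by (rule divide_right_mono) simp
  finally show ?thesis
    using abs_ln_mult_le_majorant[OF assms(1)] by linarith
qed

lemma abs_ln_div_exp_le:
  assumes "t > (0::real)"
  shows "\<bar>ln t / exp t\<bar> \<le> ln_exp_majorant t"
proof -
  have "\<bar>ln t / exp t\<bar> \<le> \<bar>ln t\<bar> * (1 + t) / exp t"
    using assms mult_left_mono[of 1 "1 + t" "\<bar>ln t\<bar>"] by (simp add: abs_divide divide_right_mono)
  then show ?thesis
    using abs_ln_mult_le_majorant[OF assms] by linarith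
qed

lemma DERIV_difference_quotient_LIMSEQ:
  assumes "(g has_real_derivative D) (at a)"
  shows "(\<lambda>n. (g (a + 1 / real (Suc n)) - g a) / (1 / real (Suc n))) \<longlonglongrightarrow> D"
proof -
  have "(\<lambda>h. (g (a + h) - g a) / h) \<midarrow>0\<rightarrow> D" using assms by (simp add: DERIV_def)
  moreover have "(\<lambda>n. 1 / real (Suc n)) \<longlonglongrightarrow> 0"
    using LIMSEQ_Suc[OF lim_const_over_n[of 1]] by simp
  ultimately show ?thesis
    unfolding LIMSEQ_SEQ_conv[symmetric] by (elim allE[of _ "\<lambda>n. 1 / real (Suc n)"]) simp
qed

lemma powr_difference_quotient_LIMSEQ:
  assumes "t > (0::real)"
  shows "(\<lambda>n. (t powr (1 / real (Suc n)) - 1) / (1 / real (Suc n))) \<longlonglongrightarrow> ln t"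
proof -
  have "((\<lambda>u. t powr u) has_real_derivative t powr 0 * ln t) (at 0)"
    using assms by (auto intro!: derivative_eq_intros)
  then show ?thesis
    using DERIV_difference_quotient_LIMSEQ assms by fastforce
qed

lemma Gamma_difference_quotient_LIMSEQ:
  "(\<lambda>n. (Gamma (1 + 1 / real (Suc n)) - 1) / (1 / real (Suc n))) \<longlonglongrightarrow> - euler_mascheroni"
proof -
  have "(Gamma has_real_derivative - euler_mascheroni) (at 1)"
    using has_field_derivative_Gamma[of "1::real" UNIV] by simp
  then show ?thesis
    using DERIV_difference_quotient_LIMSEQ by fastforce
qed

lemma ln_exp_has_integral_Ioi:
  "((\<lambda>t::real. ln t / exp t) has_integral - euler_mascheroni) {0<..}"
  "(\<lambda>t::real. ln t / exp t) absolutely_integrable_on {0<..}"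
proof -
  \<comment> \<open>Differentiate the Gamma integral at 1 under the integral sign, by dominated convergence.\<close>
  define h where "h n = 1 / real (Suc n)" for n
  define f where "f n t = (t powr h n - 1) / h n / exp t" for n t
  have h: "0 < h n" "h n \<le> 1" for n
    unfolding h_def by auto
  have f_integral: "(f n has_integral (Gamma (1 + h n) - 1) / h n) {0<..}" for n
  proof -
    have "((\<lambda>t. (t powr (1 + h n - 1) / exp t - 1 / exp t) / h n)
            has_integral (Gamma (1 + h n) - 1) / h n) {0<..}"
      using h[of n] by (intro has_integral_divide has_integral_diff Gamma_has_integral_Ioi
          exp_neg_has_integral_Ioi) auto
    then show ?thesis
      unfolding f_def by (simp add: diff_divide_distrib ac_simps)
  qed
  have f_bound: "\<forall>t\<in>{0<..}. norm (f n t) \<le> ln_exp_majorant t" for n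
  proof
    fix t :: real
    assume "t \<in> {0<..}"
    then show "norm (f n t) \<le> ln_exp_majorant t"
      unfolding f_def real_norm_def using h[of n] by (intro abs_powr_difference_quotient_div_exp_le) auto
  qed
  have f_limit: "\<forall>t\<in>{0<..}. (\<lambda>n. f n t) \<longlonglongrightarrow> ln t / exp t"
  proof
    fix t :: real
    assume "t \<in> {0<..}"
    then show "(\<lambda>n. f n t) \<longlonglongrightarrow> ln t / exp t"
      unfolding f_def h_def by (intro tendsto_divide powr_difference_quotient_LIMSEQ tendsto_const) auto
  qed
  show integral: "((\<lambda>t::real. ln t / exp t) has_integral - euler_mascheroni) {0<..}"
    by (rule has_integral_dominated_convergence[OF f_integral ln_exp_majorant_integrable f_bound
          f_limit Gamma_difference_quotient_LIMSEQ[folded h_def]])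
  show "(\<lambda>t::real. ln t / exp t) absolutely_integrable_on {0<..}"
    by (rule absolutely_integrable_integrable_bound[OF _ has_integral_integrable[OF integral]
          ln_exp_majorant_integrable]) (simp only: real_norm_def greaterThan_iff abs_ln_div_exp_le)
qed

section \<open>Mellin transforms on (0,1)\<close>

lemma has_absolute_integral_powr_comp_minus_ln:
  fixes k :: real and \<psi> :: "real \<Rightarrow> real"
  assumes k: "k > 0"
  shows "((\<lambda>w. exp (-w) * \<psi> (w / k) / k) absolutely_integrable_on {0<..} \<and>
           integral {0<..} (\<lambda>w. exp (-w) * \<psi> (w / k) / k) = b) \<longleftrightarrow>
         ((\<lambda>x. x powr (k - 1) * \<psi> (-ln x)) absolutely_integrable_on {0<..<1} \<and>
           integral {0<..<1} (\<lambda>x. x powr (k - 1) * \<psi> (-ln x)) = b)"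
proof -
  define g where "g w = exp (-w / k)" for w
  have "{0::real<..} \<in> sets lebesgue"
    by (intro sets_completionI_sets) simp
  moreover have "(g has_field_derivative - exp (-w / k) / k) (at w within {0<..})" for w
    unfolding g_def using k by (auto intro!: derivative_eq_intros)
  moreover have "inj_on g {0<..}"
    unfolding g_def inj_on_def using k by auto
  moreover have "g ` {0<..} = {0<..<1}"
  proof
    show "g ` {0<..} \<subseteq> {0<..<1}" unfolding g_def using k by auto
    show "{0<..<1} \<subseteq> g ` {0<..}"
    proof
      fix x :: real
      assume x: "x \<in> {0<..<1}"
      then have "x = g (-k * ln x)" "-k * ln x \<in> {0<..}"
        unfolding g_def using k by (auto simp: mult_pos_neg)
      then show "x \<in> g ` {0<..}" by blast
    qed
  qed
  moreover have "\<bar>- exp (-w / k) / k\<bar> * (g w powr (k - 1) * \<psi> (-ln (g w)))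
                   = exp (-w) * \<psi> (w / k) / k" for w
  proof -
    have "exp (-w / k) * exp ((k - 1) * (-w / k)) = exp (-w)"
      using k by (simp add: exp_add[symmetric] field_simps)
    then show ?thesis
      unfolding g_def using k by (simp add: powr_def mult.assoc)
  qed
  ultimately show ?thesis
    using has_absolute_integral_change_of_variables_1'[of "{0<..}" g "\<lambda>w. - exp (-w / k) / k"
        "\<lambda>x. x powr (k - 1) * \<psi> (-ln x)" b]
    by simp
qed

lemma exp_ln_scaled_integral_Ioi:
  fixes k :: real
  assumes k: "k > 0"
  shows "(\<lambda>w. exp (-w) * ln (w / k) / k) absolutely_integrable_on {0<..}"
    and "integral {0<..} (\<lambda>w. exp (-w) * ln (w / k) / k) = - (euler_mascheroni + ln k) / k"
proof -
  define G where "G w = (ln w / exp w - ln k * (1 / exp w)) / k" for w :: real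
  have eq: "exp (-w) * ln (w / k) / k = G w" if "w \<in> {0<..}" for w
    using that k unfolding G_def by (simp add: ln_div exp_minus field_simps)
  have "G absolutely_integrable_on {0<..}"
    unfolding G_def
    by (intro set_integrable_divide set_integral_diff(1) set_integrable_mult_right
        ln_exp_has_integral_Ioi(2) exp_neg_absolutely_integrable_Ioi)
  then show "(\<lambda>w. exp (-w) * ln (w / k) / k) absolutely_integrable_on {0<..}"
    by (rule absolutely_integrable_spike[OF _ negligible_empty]) (use eq in auto)
  have "(G has_integral (- euler_mascheroni - ln k * 1) / k) {0<..}"
    unfolding G_def
    by (intro has_integral_divide has_integral_diff has_integral_mult_right
        ln_exp_has_integral_Ioi(1) exp_neg_has_integral_Ioi)
  then have "(G has_integral - (euler_mascheroni + ln k) / k) {0<..}"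
    by (simp add: field_simps)
  then have "((\<lambda>w. exp (-w) * ln (w / k) / k) has_integral - (euler_mascheroni + ln k) / k) {0<..}"
    by (rule has_integral_eq[rotated]) (use eq in auto)
  then show "integral {0<..} (\<lambda>w. exp (-w) * ln (w / k) / k) = - (euler_mascheroni + ln k) / k"
    by (rule integral_unique)
qed

lemma powr_ln_minus_ln_integral:
  fixes k :: real
  assumes "k > 0"
  shows "(\<lambda>x. x powr (k - 1) * ln (- ln x)) absolutely_integrable_on {0<..<1}"
    and "integral {0<..<1} (\<lambda>x. x powr (k - 1) * ln (- ln x)) = - (euler_mascheroni + ln k) / k"
  using has_absolute_integral_powr_comp_minus_ln[OF assms, of ln "- (euler_mascheroni + ln k) / k"]
    exp_ln_scaled_integral_Ioi[OF assms] by blast+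

lemma powr_abs_ln_minus_ln_integral_le:
  fixes k :: real
  assumes k: "k > 0"
  shows "integral {0<..<1} (\<lambda>x. x powr (k - 1) * \<bar>ln (- ln x)\<bar>)
           \<le> (integral {0<..} (\<lambda>t. \<bar>ln t\<bar> / exp t) + \<bar>ln k\<bar>) / k"
proof -
  define H where "H w = exp (-w) * \<bar>ln (w / k)\<bar> / k" for w :: real
  have abs_ln_integrable: "(\<lambda>w::real. \<bar>ln w\<bar> / exp w) integrable_on {0<..}"
    using set_lebesgue_integral_eq_integral(1)[OF set_integrable_abs[OF ln_exp_has_integral_Ioi(2)]]
    by (simp add: abs_divide)
  have exp_integrable: "(\<lambda>w::real. 1 / exp w) integrable_on {0<..}"
    using exp_neg_has_integral_Ioi by (rule has_integral_integrable)
  have "H absolutely_integrable_on {0<..}"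
    using set_integrable_abs[OF exp_ln_scaled_integral_Ioi(1)[OF k]] k
    unfolding H_def by (simp add: abs_mult)
  then have "integral {0<..<1} (\<lambda>x. x powr (k - 1) * \<bar>ln (- ln x)\<bar>) = integral {0<..} H"
    using has_absolute_integral_powr_comp_minus_ln[OF k, of "\<lambda>y. \<bar>ln y\<bar>" "integral {0<..} H"]
    unfolding H_def by blast
  also have "\<dots> \<le> integral {0<..} (\<lambda>w. (\<bar>ln w\<bar> / exp w + \<bar>ln k\<bar> * (1 / exp w)) / k)"
  proof (rule integral_le)
    show "H integrable_on {0<..}"
      using \<open>H absolutely_integrable_on {0<..}\<close> by (rule set_lebesgue_integral_eq_integral(1))
    show "(\<lambda>w. (\<bar>ln w\<bar> / exp w + \<bar>ln k\<bar> * (1 / exp w)) / k) integrable_on {0<..}"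
      by (intro integrable_on_divide integrable_add integrable_on_mult_right
          abs_ln_integrable exp_integrable)
  next
    fix w :: real
    assume "w \<in> {0<..}"
    then have "\<bar>ln (w / k)\<bar> \<le> \<bar>ln w\<bar> + \<bar>ln k\<bar>"
      using k by (simp add: ln_div)
    then show "H w \<le> (\<bar>ln w\<bar> / exp w + \<bar>ln k\<bar> * (1 / exp w)) / k"
      unfolding H_def using k
      by (intro divide_right_mono) (auto simp: exp_minus field_simps)
  qed
  also have "\<dots> = (integral {0<..} (\<lambda>t. \<bar>ln t\<bar> / exp t)
                      + \<bar>ln k\<bar> * integral {0<..} (\<lambda>t::real. 1 / exp t)) / k"
    unfolding integral_divide
    by (subst integral_add)
      (simp_all only: integral_mult_right abs_ln_integrable exp_integrable integrable_on_mult_right)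
  also have "\<dots> = (integral {0<..} (\<lambda>t. \<bar>ln t\<bar> / exp t) + \<bar>ln k\<bar>) / k"
    using integral_unique[OF exp_neg_has_integral_Ioi] by simp
  finally show ?thesis .
qed

lemma powr_has_integral_Ioo:
  fixes k :: real
  assumes "k > 0"
  shows "((\<lambda>x. x powr (k - 1)) has_integral 1 / k) {0<..<1}"
  using has_integral_powr_from_0[of "k - 1" 1] assms by (simp add: has_integral_Icc_iff_Ioo)

section \<open>The derivative of the zeta function at 2\<close>

lemma ln_le_powr_div:
  assumes "x > (0::real)" "a > 0"
  shows "ln x \<le> x powr a / a"
proof -
  have "a * ln x = ln (x powr a)" using assms by (simp add: ln_powr)
  also have "\<dots> \<le> x powr a" using ln_le_minus_one[of "x powr a"] assms by simp
  finally show ?thesis using assms by (simp add: field_simps)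
qed

lemma summable_ln_div_powr:
  assumes "s > (1::real)"
  shows "summable (\<lambda>n. ln (real n) / real n powr s)"
proof (rule summable_comparison_test)
  define \<epsilon> where "\<epsilon> = (s - 1) / 2"
  have \<epsilon>: "\<epsilon> > 0" using assms unfolding \<epsilon>_def by simp
  have "\<epsilon> - s < -1" using assms unfolding \<epsilon>_def by (simp add: field_simps)
  then show "summable (\<lambda>n. real n powr (\<epsilon> - s) / \<epsilon>)"
    by (intro summable_divide) (simp add: summable_real_powr_iff)
  show "\<exists>N. \<forall>n\<ge>N. norm (ln (real n) / real n powr s) \<le> real n powr (\<epsilon> - s) / \<epsilon>"
  proof (intro exI allI impI)
    fix n :: nat
    assume "n \<ge> 1"
    then have "0 \<le> ln (real n)" by simp
    have "ln (real n) / real n powr s \<le> (real n powr \<epsilon> / \<epsilon>) / real n powr s"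
      using ln_le_powr_div[of "real n" \<epsilon>] \<epsilon> \<open>n \<ge> 1\<close> by (intro divide_right_mono) auto
    also have "\<dots> = real n powr (\<epsilon> - s) / \<epsilon>"
      by (simp add: powr_diff)
    finally show "norm (ln (real n) / real n powr s) \<le> real n powr (\<epsilon> - s) / \<epsilon>"
      using \<open>0 \<le> ln (real n)\<close> by simp
  qed
qed

lemma summable_ln_div_square: "summable (\<lambda>n. ln (real n) / real n ^ 2)"
proof -
  have "(\<lambda>n. ln (real n) / real n ^ 2) = (\<lambda>n. ln (real n) / real n powr 2)"
    by (intro ext) (simp add: powr_realpow)
  then show ?thesis
    using summable_ln_div_powr[of 2] by simp
qed

lemma norm_of_nat_powr: "norm (of_nat n powr z :: complex) = real n powr Re z"
  by (subst norm_powr_real_powr) auto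

lemma summable_inverse_Suc_powr:
  assumes "Re s > 1"
  shows "summable (\<lambda>n. 1 / of_nat (Suc n) powr s :: complex)"
proof (rule summable_norm_cancel)
  have "summable (\<lambda>n. real (Suc n) powr - Re s)"
    using assms summable_real_powr_iff[of "- Re s"] by (subst summable_Suc_iff) simp
  then show "summable (\<lambda>n. norm (1 / of_nat (Suc n) powr s :: complex))"
    unfolding norm_divide norm_of_nat_powr by (simp add: powr_minus_divide del: of_nat_Suc)
qed

lemma uniformly_convergent_zeta_derivative_series:
  assumes "\<sigma> > 1" "\<And>z. z \<in> S \<Longrightarrow> \<sigma> \<le> Re z"
  shows "uniformly_convergent_on S (\<lambda>n z. \<Sum>i<n. - Ln (of_nat (Suc i)) / of_nat (Suc i) powr z)"
proof (rule Weierstrass_m_test')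
  show "norm (- Ln (of_nat (Suc n)) / of_nat (Suc n) powr z) \<le> ln (real (Suc n)) / real (Suc n) powr \<sigma>"
    if "z \<in> S" for n z
  proof -
    have "norm (- Ln (of_nat (Suc n)) / of_nat (Suc n) powr z) = ln (real (Suc n)) / real (Suc n) powr Re z"
      unfolding norm_divide norm_minus_cancel norm_of_nat_powr by (simp del: of_nat_Suc add: Ln_of_nat)
    also have "\<dots> \<le> ln (real (Suc n)) / real (Suc n) powr \<sigma>"
      using assms that by (intro divide_left_mono powr_mono) auto
    finally show ?thesis .
  qed
  show "summable (\<lambda>n. ln (real (Suc n)) / real (Suc n) powr \<sigma>)"
    using summable_ln_div_powr[OF assms(1)] by (subst summable_Suc_iff)
qed

lemma riemann_zeta_has_field_derivative:
  assumes "Re s > 1"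
  shows "(riemann_zeta has_field_derivative (\<Sum>n. - Ln (of_nat (Suc n)) / of_nat (Suc n) powr s)) (at s)"
proof -
  define f where "f n z = 1 / of_nat (Suc n) powr z" for n and z :: complex
  define f' where "f' n z = - Ln (of_nat (Suc n)) / of_nat (Suc n) powr z" for n and z :: complex
  define S where "S = cball s ((Re s - 1) / 2)"
  have deriv: "(f n has_field_derivative f' n z) (at z within S)" for n z
  proof -
    have "((\<lambda>z. 1 / a powr z) has_field_derivative - Ln a / a powr z) (at z)" if "a \<noteq> 0" for a
      using that by (auto intro!: derivative_eq_intros simp: power2_eq_square)
    then show ?thesis
      unfolding f_def f'_def by (rule has_field_derivative_at_within) (simp del: of_nat_Suc)
  qed
  have uniform: "uniformly_convergent_on S (\<lambda>n z. \<Sum>i<n. f' i z)"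
    unfolding f'_def
  proof (rule uniformly_convergent_zeta_derivative_series)
    show "(Re s + 1) / 2 \<le> Re z" if "z \<in> S" for z
      using that abs_Re_le_cmod[of "s - z"] unfolding S_def by (simp add: dist_norm)
  qed (use assms in simp)
  have s: "s \<in> S" "s \<in> interior S"
    using assms unfolding S_def by auto
  have "((\<lambda>z. \<Sum>n. f n z) has_field_derivative (\<Sum>n. f' n s)) (at s)"
    by (rule has_field_derivative_series'(2)[where f = f and f' = f',
          OF convex_cball[of s "(Re s - 1) / 2", folded S_def] _ uniform s(1)
          summable_inverse_Suc_powr[OF assms, folded f_def] s(2)]) (rule deriv)
  then show ?thesis
    unfolding f'_def
  proof (rule has_field_derivative_transform_within_open)
    show "open {z. Re z > 1}" "s \<in> {z. Re z > 1}"
      using assms by (auto simp: open_halfspace_Re_gt)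
    show "(\<Sum>n. f n z) = riemann_zeta z" if "z \<in> {z. Re z > 1}" for z
      using that unfolding riemann_zeta_def f_def by simp
  qed
qed

lemma deriv_riemann_zeta_2:
  "deriv riemann_zeta 2 = - of_real (\<Sum>n. ln (real n) / real n ^ 2)"
proof -
  define L where "L = (\<Sum>n. ln (real n) / real n ^ 2)"
  have "(\<lambda>n. ln (real (Suc n)) / real (Suc n) ^ 2) sums L"
    using summable_sums[OF summable_ln_div_square] unfolding L_def by (subst sums_Suc_iff) simp
  then have "(\<lambda>n. - of_real (ln (real (Suc n)) / real (Suc n) ^ 2)) sums (- of_real L :: complex)"
    by (intro sums_minus sums_of_real)
  moreover have "(\<lambda>n. - Ln (of_nat (Suc n)) / of_nat (Suc n) powr 2)
                   = (\<lambda>n. - of_real (ln (real (Suc n)) / real (Suc n) ^ 2))"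
    by (intro ext) (simp del: of_nat_Suc add: Ln_of_nat powr_nat')
  ultimately have "(\<lambda>n. - Ln (of_nat (Suc n)) / of_nat (Suc n) powr 2) sums (- of_real L)"
    by (simp only:)
  then show ?thesis
    using DERIV_imp_deriv[OF riemann_zeta_has_field_derivative[of 2]] unfolding L_def
    by (simp add: sums_iff)
qed

section \<open>Termwise integration of ln(1 - x^m)\<close>

lemma has_integral_sums:
  fixes f :: "nat \<Rightarrow> 'a::euclidean_space \<Rightarrow> real"
  assumes f: "\<And>n. f n absolutely_integrable_on S"
    and sums: "\<And>x. x \<in> S \<Longrightarrow> (\<lambda>n. f n x) sums g x"
    and summable_abs: "\<And>x. x \<in> S \<Longrightarrow> summable (\<lambda>n. \<bar>f n x\<bar>)"
    and summable_integral: "summable (\<lambda>n. integral S (\<lambda>x. \<bar>f n x\<bar>))"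
  shows "(g has_integral (\<Sum>n. integral S (f n))) S"
proof -
  define v where "v n x = indicator S x *\<^sub>R f n x" for n x
  have v: "integrable lebesgue (v n)" for n
    using f[of n] unfolding v_def set_integrable_def .
  have "AE x in lebesgue. summable (\<lambda>n. norm (v n x))"
    using summable_abs unfolding v_def by (auto simp: indicator_def)
  moreover have "(\<integral>x. norm (v n x) \<partial>lebesgue) = integral S (\<lambda>x. \<bar>f n x\<bar>)" for n
  proof -
    have "(\<integral>x. norm (v n x) \<partial>lebesgue) = (LINT x:S|lebesgue. \<bar>f n x\<bar>)"
      unfolding v_def set_lebesgue_integral_def
      by (intro Bochner_Integration.integral_cong) (auto simp: indicator_def)
    also have "\<dots> = integral S (\<lambda>x. \<bar>f n x\<bar>)"
      by (rule set_lebesgue_integral_eq_integral(2)[OF set_integrable_abs[OF f]])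
    finally show ?thesis .
  qed
  ultimately have summable: "summable (\<lambda>n. \<integral>x. norm (v n x) \<partial>lebesgue)"
    and AE: "AE x in lebesgue. summable (\<lambda>n. norm (v n x))"
    using summable_integral by simp_all
  have sum_v: "(\<Sum>n. v n x) = indicator S x *\<^sub>R g x" for x
    using sums_unique[OF sums, of x] unfolding v_def by (auto simp: indicator_def)
  have g: "g absolutely_integrable_on S"
    using integrable_suminf[OF v AE summable] unfolding sum_v set_integrable_def .
  have "integral S g = (LINT x:S|lebesgue. g x)"
    using set_lebesgue_integral_eq_integral(2)[OF g] by simp
  also have "\<dots> = (\<Sum>n. \<integral>x. v n x \<partial>lebesgue)"
    unfolding set_lebesgue_integral_def sum_v[symmetric] by (rule integral_suminf[OF v AE summable])
  also have "\<dots> = (\<Sum>n. integral S (f n))"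
    using set_lebesgue_integral_eq_integral(2)[OF f] unfolding v_def set_lebesgue_integral_def
    by simp
  finally show ?thesis
    using integrable_integral[OF set_lebesgue_integral_eq_integral(1)[OF g]] by simp
qed

lemma summable_integral_abs_comparison:
  fixes f :: "nat \<Rightarrow> 'a::euclidean_space \<Rightarrow> real"
  assumes "\<And>n. f n absolutely_integrable_on S"
    and "\<And>n. n \<ge> N \<Longrightarrow> integral S (\<lambda>x. \<bar>f n x\<bar>) \<le> b n"
    and "summable b"
  shows "summable (\<lambda>n. integral S (\<lambda>x. \<bar>f n x\<bar>))"
proof (rule summable_comparison_test[OF _ assms(3)])
  have "0 \<le> integral S (\<lambda>x. \<bar>f n x\<bar>)" for n
    using set_lebesgue_integral_eq_integral(1)[OF set_integrable_abs[OF assms(1)]]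
    by (rule integral_nonneg) simp
  then show "\<exists>N. \<forall>n\<ge>N. norm (integral S (\<lambda>x. \<bar>f n x\<bar>)) \<le> b n"
    using assms(2) by auto
qed

lemma ln_one_minus_power_div_sums:
  fixes x :: real
  assumes "0 < x" "x < 1" "m > 0"
  shows "(\<lambda>n. - (x powr (real (m * n) - 1) / real n)) sums (ln (1 - x ^ m) / x)"
proof -
  have "(\<lambda>n. - ((x ^ m) ^ n / real n)) sums ln (1 - x ^ m)"
    using ln_series'[of "- (x ^ m)"] assms by (simp add: power_less_one_iff)
  then have "(\<lambda>n. - ((x ^ m) ^ n / real n) / x) sums (ln (1 - x ^ m) / x)"
    by (rule sums_divide)
  moreover have "- ((x ^ m) ^ n / real n) / x = - (x powr (real (m * n) - 1) / real n)" for n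
  proof (cases "n = 0")
    case False
    then have "x powr (real (m * n) - 1) = x ^ (m * n) / x"
      using assms by (simp del: of_nat_mult add: powr_diff powr_realpow)
    then show ?thesis
      by (simp add: power_mult)
  qed simp
  ultimately show ?thesis
    by simp
qed

lemma has_integral_ln_one_minus_power_mult:
  fixes \<phi> :: "real \<Rightarrow> real" and m :: nat
  assumes m: "m > 0"
    and \<phi>: "\<And>k. k > 0 \<Longrightarrow> (\<lambda>x. x powr (k - 1) * \<phi> x) absolutely_integrable_on {0<..<1}"
    and bound: "\<And>k. k > 0 \<Longrightarrow> integral {0<..<1} (\<lambda>x. x powr (k - 1) * \<bar>\<phi> x\<bar>) \<le> B k"
    and summable: "summable (\<lambda>n. B (real (m * n)) / real n)"
  shows "((\<lambda>x. ln (1 - x ^ m) * \<phi> x / x) has_integral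
           (\<Sum>n. - integral {0<..<1} (\<lambda>x. x powr (real (m * n) - 1) * \<phi> x) / real n)) {0<..<1}"
proof -
  \<comment> \<open>The term for n = 0 vanishes, since x / 0 = 0.\<close>
  define f where "f n x = x powr (real (m * n) - 1) * \<phi> x * (- 1 / real n)" for n x
  have f_eq: "f n x = - (x powr (real (m * n) - 1) / real n) * \<phi> x" for n x
    unfolding f_def by simp
  have f_integrable: "f n absolutely_integrable_on {0<..<1}" for n
    unfolding f_def using m by (intro set_integrable_mult_left \<phi>) simp
  have "((\<lambda>x. ln (1 - x ^ m) * \<phi> x / x) has_integral (\<Sum>n. integral {0<..<1} (f n))) {0<..<1}"
  proof (rule has_integral_sums[OF f_integrable])
    fix x :: real
    assume "x \<in> {0<..<1}"
    then have sums: "(\<lambda>n. - (x powr (real (m * n) - 1) / real n)) sums (ln (1 - x ^ m) / x)"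
      using m by (intro ln_one_minus_power_div_sums) auto
    then show "(\<lambda>n. f n x) sums (ln (1 - x ^ m) * \<phi> x / x)"
      unfolding f_eq using sums_mult2[OF sums, of "\<phi> x"] by simp
    have "summable (\<lambda>n. x powr (real (m * n) - 1) / real n)"
      using sums_summable[OF sums] unfolding summable_minus_iff .
    then have "summable (\<lambda>n. x powr (real (m * n) - 1) / real n * \<bar>\<phi> x\<bar>)"
      by (rule summable_mult2)
    then show "summable (\<lambda>n. \<bar>f n x\<bar>)"
      unfolding f_eq by (simp add: abs_mult)
  next
    show "summable (\<lambda>n. integral {0<..<1} (\<lambda>x. \<bar>f n x\<bar>))"
    proof (rule summable_integral_abs_comparison[OF f_integrable _ summable])
      fix n :: nat
      assume "n \<ge> 1"
      have "integral {0<..<1} (\<lambda>x. \<bar>f n x\<bar>)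
              = integral {0<..<1} (\<lambda>x. x powr (real (m * n) - 1) * \<bar>\<phi> x\<bar>) / real n"
        unfolding f_def by (simp add: abs_mult)
      also have "\<dots> \<le> B (real (m * n)) / real n"
        using bound[of "real (m * n)"] m \<open>n \<ge> 1\<close> by (intro divide_right_mono) auto
      finally show "integral {0<..<1} (\<lambda>x. \<bar>f n x\<bar>) \<le> B (real (m * n)) / real n" .
    qed
  qed
  then show ?thesis
    unfolding f_def by simp
qed

lemma inverse_squares_sums_from_0: "(\<lambda>n. 1 / real n ^ 2) sums (pi\<^sup>2 / 6)"
proof -
  have "(\<lambda>n. 1 / real (Suc n) ^ 2) sums (pi\<^sup>2 / 6)"
    using inverse_squares_sums by (simp add: add.commute)
  then have "(\<lambda>n. 1 / real n ^ 2) sums (pi\<^sup>2 / 6 + 1 / real 0 ^ 2)"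
    by (subst sums_Suc_iff[symmetric])
  then show ?thesis by simp
qed

lemma summable_const_add_abs_ln_div_mult:
  fixes C :: real
  assumes m: "m > 0"
  shows "summable (\<lambda>n. (C + \<bar>ln (real (m * n))\<bar>) / real (m * n) / real n)"
proof -
  have "summable (\<lambda>n. (C + ln (real m)) / real m * (1 / real n ^ 2) + 1 / real m * (ln (real n) / real n ^ 2))"
    by (intro summable_add summable_mult sums_summable[OF inverse_squares_sums_from_0]
        summable_ln_div_square)
  moreover have "(C + \<bar>ln (real (m * n))\<bar>) / real (m * n) / real n
                   = (C + ln (real m)) / real m * (1 / real n ^ 2) + 1 / real m * (ln (real n) / real n ^ 2)"
    if "n \<ge> 1" for n
    using m that by (simp add: ln_mult field_simps power2_eq_square)
  ultimately show ?thesis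
    by (subst summable_cong[OF eventually_sequentiallyI[of 1]]) auto
qed

lemma has_integral_ln_one_minus_power_ln_minus_ln:
  assumes m: "m > 0"
  shows "((\<lambda>x. ln (1 - x ^ m) * ln (- ln x) / x) has_integral
           ((euler_mascheroni + ln (real m)) * (pi\<^sup>2 / 6) + (\<Sum>n. ln (real n) / real n ^ 2)) / real m) {0<..<1}"
proof -
  have "- integral {0<..<1} (\<lambda>x. x powr (real (m * n) - 1) * ln (- ln x)) / real n
          = (euler_mascheroni + ln (real m)) / real m * (1 / real n ^ 2) + 1 / real m * (ln (real n) / real n ^ 2)"
    for n
  proof (cases "n = 0")
    case False
    then show ?thesis
      using m powr_ln_minus_ln_integral(2)[of "real (m * n)"]
      by (simp add: ln_mult field_simps power2_eq_square)
  qed simp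
  moreover have "(\<lambda>n. (euler_mascheroni + ln (real m)) / real m * (1 / real n ^ 2)
                      + 1 / real m * (ln (real n) / real n ^ 2))
                   sums ((euler_mascheroni + ln (real m)) / real m * (pi\<^sup>2 / 6)
                      + 1 / real m * (\<Sum>n. ln (real n) / real n ^ 2))"
    by (intro sums_add sums_mult inverse_squares_sums_from_0 summable_sums summable_ln_div_square)
  moreover have "(euler_mascheroni + ln (real m)) / real m * (pi\<^sup>2 / 6)
                   + 1 / real m * (\<Sum>n. ln (real n) / real n ^ 2)
                 = ((euler_mascheroni + ln (real m)) * (pi\<^sup>2 / 6) + (\<Sum>n. ln (real n) / real n ^ 2)) / real m"
    using m by (simp add: field_simps)
  ultimately show ?thesis
    using has_integral_ln_one_minus_power_mult[OF m powr_ln_minus_ln_integral(1)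
        powr_abs_ln_minus_ln_integral_le summable_const_add_abs_ln_div_mult[OF m]]
    by (simp add: sums_iff)
qed

lemma has_integral_ln_one_minus_power_div:
  assumes m: "m > 0"
  shows "((\<lambda>x. ln (1 - x ^ m) / x) has_integral - (pi\<^sup>2 / 6) / real m) {0<..<1}"
proof -
  have powr_integrable: "(\<lambda>x. x powr (k - 1) * 1) absolutely_integrable_on {0<..<1}" if "k > 0" for k :: real
    using powr_has_integral_Ioo[OF that]
    by (intro nonnegative_absolutely_integrable_1) (auto simp: has_integral_integrable)
  have powr_bound: "integral {0<..<1} (\<lambda>x. x powr (k - 1) * \<bar>1\<bar>) \<le> 1 / k" if "k > 0" for k :: real
    using integral_unique[OF powr_has_integral_Ioo[OF that]] by simp
  have "summable (\<lambda>n. 1 / real (m * n) / real n)"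
    using summable_mult[OF sums_summable[OF inverse_squares_sums_from_0], of "1 / real m"]
    by (simp add: power2_eq_square mult.assoc)
  note series = has_integral_ln_one_minus_power_mult[of m "\<lambda>_. 1" "\<lambda>k. 1 / k", OF m powr_integrable powr_bound this]
  have "- integral {0<..<1} (\<lambda>x. x powr (real (m * n) - 1) * 1) / real n = - (1 / real m) * (1 / real n ^ 2)"
    for n
    using m integral_unique[OF powr_has_integral_Ioo[of "real (m * n)"]]
    by (cases "n = 0") (simp_all add: power2_eq_square)
  moreover have "(\<lambda>n. - (1 / real m) * (1 / real n ^ 2)) sums (- (pi\<^sup>2 / 6) / real m)"
    using sums_mult[OF inverse_squares_sums_from_0, of "- (1 / real m)"] by (simp add: ac_simps)
  ultimately show ?thesis
    using series by (simp add: sums_iff)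
qed

section \<open>The factor (1 - x)(1 + x^2)\<close>

lemma ln_one_minus_mult_one_plus_square:
  fixes x :: real
  assumes "0 < x" "x < 1"
  shows "ln ((1 - x) * (x\<^sup>2 + 1)) = ln (1 - x ^ 1) + ln (1 - x ^ 4) - ln (1 - x ^ 2)"
proof -
  have "0 < 1 - x\<^sup>2" "0 < x\<^sup>2 + 1"
    using assms by (auto simp: power_less_one_iff add_pos_nonneg)
  moreover have "1 - x ^ 4 = (1 - x\<^sup>2) * (x\<^sup>2 + 1)"
    by (simp add: algebra_simps power2_eq_square power4_eq_xxxx)
  ultimately show ?thesis
    using assms by (simp add: ln_mult_pos)
qed

lemma has_integral_ln_one_minus_mult_one_plus_square:
  fixes \<phi> :: "real \<Rightarrow> real" and I :: "nat \<Rightarrow> real"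
  assumes "\<And>m. m > 0 \<Longrightarrow> ((\<lambda>x. ln (1 - x ^ m) * \<phi> x / x) has_integral I m) {0<..<1}"
  shows "((\<lambda>x. ln ((1 - x) * (x\<^sup>2 + 1)) * \<phi> x / x) has_integral I 1 + I 4 - I 2) {0<..<1}"
proof -
  have "((\<lambda>x. ln (1 - x ^ 1) * \<phi> x / x + ln (1 - x ^ 4) * \<phi> x / x - ln (1 - x ^ 2) * \<phi> x / x)
          has_integral I 1 + I 4 - I 2) {0<..<1}"
    by (intro has_integral_diff has_integral_add assms) auto
  moreover have "ln (1 - x ^ 1) * \<phi> x / x + ln (1 - x ^ 4) * \<phi> x / x - ln (1 - x ^ 2) * \<phi> x / x
                   = ln ((1 - x) * (x\<^sup>2 + 1)) * \<phi> x / x" if "x \<in> {0<..<1}" for x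
  proof -
    from that have "0 < x" "x < 1" by auto
    then show ?thesis
      unfolding ln_one_minus_mult_one_plus_square[OF \<open>0 < x\<close> \<open>x < 1\<close>]
      by (simp add: ring_distribs diff_divide_distrib add_divide_distrib)
  qed
  ultimately show ?thesis
    by (rule has_integral_eq[rotated])
qed

lemma has_integral_ln_one_minus_mult_one_plus_square_ln_minus_ln:
  "((\<lambda>x. ln ((1 - x) * (x\<^sup>2 + 1)) * ln (- ln x) / x) has_integral
      euler_mascheroni * pi\<^sup>2 / 8 + 3 / 4 * (\<Sum>n. ln (real n) / real n ^ 2)) {0<..<1}"
proof -
  define L where "L = (\<Sum>n. ln (real n) / real n ^ 2)"
  define I where "I m = ((euler_mascheroni + ln (real m)) * (pi\<^sup>2 / 6) + L) / real m" for m :: nat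
  have "((\<lambda>x. ln (1 - x ^ m) * ln (- ln x) / x) has_integral I m) {0<..<1}" if "m > 0" for m
    unfolding I_def L_def by (rule has_integral_ln_one_minus_power_ln_minus_ln[OF that])
  then have "((\<lambda>x. ln ((1 - x) * (x\<^sup>2 + 1)) * ln (- ln x) / x) has_integral I 1 + I 4 - I 2) {0<..<1}"
    by (rule has_integral_ln_one_minus_mult_one_plus_square)
  moreover have "I 1 + I 4 - I 2 = euler_mascheroni * pi\<^sup>2 / 8 + 3 / 4 * L"
    using ln_realpow[of 2 2] unfolding I_def by (simp add: field_simps)
  ultimately show ?thesis
    unfolding L_def by simp
qed

lemma has_integral_ln_one_minus_mult_one_plus_square_div:
  "((\<lambda>x. ln ((1 - x) * (x\<^sup>2 + 1)) / x) has_integral - pi\<^sup>2 / 8) {0<..<1}"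
proof -
  define J where "J m = - (pi\<^sup>2 / 6) / real m" for m :: nat
  have "((\<lambda>x. ln (1 - x ^ m) * 1 / x) has_integral J m) {0<..<1}" if "m > 0" for m
    unfolding J_def using has_integral_ln_one_minus_power_div[OF that] by simp
  then have "((\<lambda>x. ln ((1 - x) * (x\<^sup>2 + 1)) * 1 / x) has_integral J 1 + J 4 - J 2) {0<..<1}"
    by (rule has_integral_ln_one_minus_mult_one_plus_square)
  moreover have "J 1 + J 4 - J 2 = - pi\<^sup>2 / 8"
    unfolding J_def by simp
  ultimately show ?thesis
    by simp
qed

lemma Ln_of_real_neg:
  fixes y :: real
  assumes "y < 0"
  shows "Ln (of_real y) = of_real (ln (- y)) + \<i> * of_real pi"
  using Ln_minus[of "of_real (- y)"] Ln_of_real[of "- y"] assms by simp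

theorem mainTheorem14:
  shows "((\<lambda>x::real. complex_of_real (ln ((1 - x) * (x\<^sup>2 + 1)))
            * Ln (complex_of_real (ln x)) / complex_of_real x)
          has_integral
          (1/8) * (- 6 * deriv riemann_zeta 2
                   + (euler_mascheroni - \<i> * of_real pi) * of_real (pi\<^sup>2))) {0<..<1}"
proof -
  define L where "L = (\<Sum>n. ln (real n) / real n ^ 2)"
  have integral: "((\<lambda>x. of_real (ln ((1 - x) * (x\<^sup>2 + 1)) * ln (- ln x) / x)
            + \<i> * of_real pi * of_real (ln ((1 - x) * (x\<^sup>2 + 1)) / x))
          has_integral of_real (euler_mascheroni * pi\<^sup>2 / 8 + 3 / 4 * L)
            + \<i> * of_real pi * of_real (- pi\<^sup>2 / 8)) {0<..<1}"
    unfolding L_def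
    by (intro has_integral_add has_integral_mult_right has_integral_of_real
        has_integral_ln_one_minus_mult_one_plus_square_ln_minus_ln
        has_integral_ln_one_minus_mult_one_plus_square_div)
  have integrand: "complex_of_real (ln ((1 - x) * (x\<^sup>2 + 1))) * Ln (of_real (ln x)) / of_real x
      = of_real (ln ((1 - x) * (x\<^sup>2 + 1)) * ln (- ln x) / x)
        + \<i> * of_real pi * of_real (ln ((1 - x) * (x\<^sup>2 + 1)) / x)" if "x \<in> {0<..<1}" for x
    using that Ln_of_real_neg[of "ln x"] by (simp add: field_simps)
  have integral_value: "of_real (euler_mascheroni * pi\<^sup>2 / 8 + 3 / 4 * L) + \<i> * of_real pi * of_real (- pi\<^sup>2 / 8)
      = (1/8) * (- 6 * deriv riemann_zeta 2 + (euler_mascheroni - \<i> * of_real pi) * of_real (pi\<^sup>2))"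
    unfolding deriv_riemann_zeta_2 L_def
    by (simp add: complex_eq_iff field_simps power2_eq_square power3_eq_cube)
  show ?thesis
    unfolding integral_value[symmetric] by (rule has_integral_eq[OF _ integral]) (simp add: integrand)
qed

end
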